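(* Let $\ell\ge1$, $r_0,\dots,r_\ell\ge1$ integers, $d_0,\dots,d_\ell$ integers, $\mathbf{g}\ge0$ an integer, $\mu_k=d_k/r_k$, $r_V=\sum_kr_k$, $d_V=\sum_kd_k$, $\pi_R=\prod_k(r_k-1)!$, and $c>\max_k\mu_k$ real. With the integrals $\alpha_0,\alpha_j,\alpha_{jk},\beta_0,\beta_j$ defined in the context, for all $1\le j,k\le\ell$ with $j\ne k$: $\alpha_0=\frac{\pi_R}{r_V!}(cr_V-d_V)$, $\alpha_j=\frac{\pi_R}{(r_V+1)!}r_j\big(c(r_V+1)-d_V-\mu_j\big)$, $\alpha_{jk}=\frac{\pi_R}{(r_V+2)!}r_jr_k\big(c(r_V+2)-d_V-\mu_j-\mu_k\big)$, $\alpha_{jj}=\frac{\pi_R}{(r_V+2)!}r_j(r_j+1)\big(c(r_V+2)-d_V-2\mu_j\big)$, $\beta_0=\frac{\pi_R}{(r_V-1)!}\big((r_V-1)r_Vc+2(1-\mathbf{g})-(r_V-1)d_V\big)$, $\beta_j=\frac{\pi_Rr_j}{r_V!}\big(r_V(r_V-1)c+2(1-\mathbf{g})-d_V(r_V-2)-r_V\mu_j\big)$.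
   Context: $\Delta=\{x\in\mathbb{R}^\ell:L_k(x)\ge0,\ k=0,\dots,\ell\}$ with $L_j(x)=x_j$ for $1\le j\le\ell$ and $L_0(x)=1-\sum_{j=1}^\ell x_j$; $d\mu$ is Lebesgue measure on $\mathbb{R}^\ell$; on each facet $F_j=\Delta\cap\{L_j=0\}$, $d\sigma$ is the measure with $dL_j\wedge d\sigma=-d\mu$, and $\int_{\partial\Delta}$ is the sum of the integrals over the facets. $p_c(x)=\big(c-\sum_{k=0}^\ell\mu_kL_k(x)\big)\prod_{k=0}^\ell L_k(x)^{r_k-1}$ and $Q(x)=\frac{2(1-\mathbf{g})}{c-\sum_k\mu_kL_k(x)}+\sum_{k:\,r_k\ge2}\frac{r_k(r_k-1)}{L_k(x)}$. For $1\le r,s\le\ell$: $\alpha_0=\int_\Delta p_c\,d\mu$, $\alpha_r=\int_\Delta x_rp_c\,d\mu$, $\alpha_{rs}=\int_\Delta x_rx_sp_c\,d\mu$, $\beta_0=\int_\Delta Qp_c\,d\mu+\int_{\partial\Delta}p_c\,d\sigma$, $\beta_r=\int_\Delta Qx_rp_c\,d\mu+\int_{\partial\Delta}x_rp_c\,d\sigma$. *)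

theory Defs
  imports "HOL-Analysis.Analysis"
begin

text \<open>Points of R^l are represented as extensional functions nat => real on the
index set {1..l}; Lebesgue measure on R^l is the product measure of lborel over {1..l}.\<close>

definition Lfun :: "nat \<Rightarrow> nat \<Rightarrow> (nat \<Rightarrow> real) \<Rightarrow> real" where
  "Lfun l k x = (if k = 0 then 1 - (\<Sum>j=1..l. x j) else x k)"

definition leb :: "nat \<Rightarrow> (nat \<Rightarrow> real) measure" where
  "leb l = PiM {1..l} (\<lambda>_. lborel)"

definition Dsimplex :: "nat \<Rightarrow> (nat \<Rightarrow> real) set" where
  "Dsimplex l = {x. x \<in> space (leb l) \<and> (\<forall>k\<in>{0..l}. 0 \<le> Lfun l k x)}"

definition mu :: "(nat \<Rightarrow> nat) \<Rightarrow> (nat \<Rightarrow> int) \<Rightarrow> nat \<Rightarrow> real" where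
  "mu r d k = real_of_int (d k) / real (r k)"

definition pc :: "nat \<Rightarrow> (nat \<Rightarrow> nat) \<Rightarrow> (nat \<Rightarrow> int) \<Rightarrow> real \<Rightarrow> (nat \<Rightarrow> real) \<Rightarrow> real" where
  "pc l r d c x = (c - (\<Sum>k=0..l. mu r d k * Lfun l k x)) * (\<Prod>k=0..l. Lfun l k x ^ (r k - 1))"

definition Qfun :: "nat \<Rightarrow> (nat \<Rightarrow> nat) \<Rightarrow> (nat \<Rightarrow> int) \<Rightarrow> nat \<Rightarrow> real \<Rightarrow> (nat \<Rightarrow> real) \<Rightarrow> real" where
  "Qfun l r d g c x = 2 * (1 - real g) / (c - (\<Sum>k=0..l. mu r d k * Lfun l k x))
     + (\<Sum>k\<in>{k\<in>{0..l}. r k \<ge> 2}. real (r k) * (real (r k) - 1) / Lfun l k x)"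

text \<open>Facet F_j is parametrised by the coordinates other than one: for j >= 1 by
(x_i)_{i ~= j} with x_j = 0; for F_0 by (x_1..x_{l-1}) with x_l = 1 - sum. The measure
sigma with dL_j wedge dsigma = - dmu is then (as a positive measure) the (l-1)-dimensional
Lebesgue measure in these coordinates.\<close>

definition facet_emb :: "nat \<Rightarrow> nat \<Rightarrow> (nat \<Rightarrow> real) \<Rightarrow> (nat \<Rightarrow> real)" where
  "facet_emb l j y = (if j = 0 then y(l := 1 - (\<Sum>i=1..<l. y i)) else y(j := 0))"

definition facet_measure :: "nat \<Rightarrow> nat \<Rightarrow> (nat \<Rightarrow> real) measure" where
  "facet_measure l j = PiM ({1..l} - {if j = 0 then l else j}) (\<lambda>_. lborel)"

definition facet_integral :: "nat \<Rightarrow> nat \<Rightarrow> ((nat \<Rightarrow> real) \<Rightarrow> real) \<Rightarrow> real" where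
  "facet_integral l j f =
     (\<integral>y. indicator (Dsimplex l) (facet_emb l j y) * f (facet_emb l j y) \<partial>facet_measure l j)"

definition bdry_integral :: "nat \<Rightarrow> ((nat \<Rightarrow> real) \<Rightarrow> real) \<Rightarrow> real" where
  "bdry_integral l f = (\<Sum>j=0..l. facet_integral l j f)"

definition alpha0 where
  "alpha0 l r d c = (LINT x:Dsimplex l|leb l. pc l r d c x)"
definition alpha1 where
  "alpha1 l r d c i = (LINT x:Dsimplex l|leb l. x i * pc l r d c x)"
definition alpha2 where
  "alpha2 l r d c i j = (LINT x:Dsimplex l|leb l. x i * x j * pc l r d c x)"
definition beta0 where
  "beta0 l r d g c = (LINT x:Dsimplex l|leb l. Qfun l r d g c x * pc l r d c x)
      + bdry_integral l (pc l r d c)"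
definition beta1 where
  "beta1 l r d g c i = (LINT x:Dsimplex l|leb l. Qfun l r d g c x * x i * pc l r d c x)
      + bdry_integral l (\<lambda>x. x i * pc l r d c x)"

definition rV :: "nat \<Rightarrow> (nat \<Rightarrow> nat) \<Rightarrow> nat" where "rV l r = (\<Sum>k=0..l. r k)"
definition dV :: "nat \<Rightarrow> (nat \<Rightarrow> int) \<Rightarrow> int" where "dV l d = (\<Sum>k=0..l. d k)"
definition piR :: "nat \<Rightarrow> (nat \<Rightarrow> nat) \<Rightarrow> real" where
  "piR l r = (\<Prod>k=0..l. fact (r k - 1))"

end

theory Submission
  imports Defs
begin

text \<open>
  All integrands are polynomials in the barycentric coordinates \<open>L\<^sub>0, \<dots>, L\<^sub>\<ell>\<close>, multiplied by the
  affine factor \<open>c - \<Sum> \<mu>\<^sub>k L\<^sub>k\<close> of \<open>p\<^sub>c\<close>. Their integrals reduce to the Dirichlet moments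
  \<open>\<integral>\<^sub>\<Delta> \<Prod> L\<^sub>k\<^bsup>a\<^sub>k\<^esup> = \<Prod> a\<^sub>k! / (\<Sum> a\<^sub>k + \<ell>)!\<close>, obtained by integrating out one coordinate at a
  time against the Beta integral; multiplying by \<open>L\<^sub>k\<close> raises \<open>a\<^sub>k\<close> by one and multiplies the moment by
  \<open>(a\<^sub>k + 1) / (\<Sum> a + \<ell> + 1)\<close>. On a facet \<open>F\<^sub>j\<close> the same formula holds one dimension lower when
  \<open>a\<^sub>j = 0\<close>, and the integral vanishes otherwise.

  For \<open>\<beta>\<close>, the term \<open>2(1 - g) / (c - \<Sum> \<mu>\<^sub>k L\<^sub>k)\<close> of \<open>Q\<close> cancels the affine factor and each pole
  \<open>r\<^sub>k (r\<^sub>k - 1) / L\<^sub>k\<close> lowers the exponent \<open>r\<^sub>k - 1\<close> of \<open>L\<^sub>k\<close> by one (almost everywhere on \<open>\<Delta>\<close>). For every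
  \<open>k\<close> this interior contribution and the integral over \<open>F\<^sub>k\<close> (non-zero only if \<open>r\<^sub>k = 1\<close>) combine into
  one multiple of the same facet moment, and summing over \<open>k\<close> gives the closed forms.
\<close>

lemma integral_power_mult_power_diff:
  fixes t :: real
  assumes "t \<ge> 0"
  shows "integral {0..t} (\<lambda>y. y ^ p * (t - y) ^ m) = t ^ (p + m + 1) * fact p * fact m / fact (p + m + 1)"
proof (induction m arbitrary: p)
  case 0
  have "((\<lambda>y. y ^ (p + 1) / (p + 1)) has_real_derivative y ^ p) (at y)" for y
    by (rule derivative_eq_intros refl | simp)+
  hence "((\<lambda>y. y ^ p) has_integral (t ^ (p + 1) / (p + 1) - 0 ^ (p + 1) / (p + 1))) {0..t}"
    using assms by (intro fundamental_theorem_of_calculus)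
      (auto simp: has_real_derivative_iff_has_vector_derivative[symmetric] intro: has_field_derivative_at_within)
  hence "integral {0..t} (\<lambda>y. y ^ p) = t ^ (p + 1) / (p + 1)"
    by (simp add: integral_unique)
  thus ?case
    by (simp add: field_simps del: of_nat_Suc)
next
  case (Suc m)
  let ?F = "\<lambda>y. y ^ (p + 1) * (t - y) ^ (m + 1)"
  let ?f = "\<lambda>y. y ^ p * (t - y) ^ (m + 1)"
  let ?g = "\<lambda>y. y ^ (p + 1) * (t - y) ^ m"
  \<comment> \<open>integration by parts, moving one factor from \<open>t - y\<close> to \<open>y\<close>\<close>
  have "(?F has_real_derivative ((p + 1) * ?f y - (m + 1) * ?g y)) (at y)" for y
    by (rule derivative_eq_intros refl | simp add: algebra_simps)+
  hence "((\<lambda>y. (p + 1) * ?f y - (m + 1) * ?g y) has_integral (?F t - ?F 0)) {0..t}"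
    using assms by (intro fundamental_theorem_of_calculus)
      (auto simp: has_real_derivative_iff_has_vector_derivative[symmetric] intro: has_field_derivative_at_within)
  moreover have "integral {0..t} (\<lambda>y. (p + 1) * ?f y - (m + 1) * ?g y)
      = (p + 1) * integral {0..t} ?f - (m + 1) * integral {0..t} ?g"
    by (subst integral_diff) (auto intro!: integrable_continuous_interval continuous_intros)
  ultimately have "integral {0..t} ?f = (m + 1) / (p + 1) * integral {0..t} ?g"
    by (simp add: integral_unique field_simps)
  also have "\<dots> = (m + 1) / (p + 1) * (t ^ (p + 1 + m + 1) * fact (p + 1) * fact m / fact (p + 1 + m + 1))"
    by (simp only: Suc.IH)
  also have "\<dots> = t ^ (p + Suc m + 1) * fact p * fact (Suc m) / fact (p + Suc m + 1)"
    by (simp add: field_simps del: of_nat_Suc)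
  finally show ?case
    by simp
qed

definition corner_simplex :: "'a set \<Rightarrow> real \<Rightarrow> ('a \<Rightarrow> real) set" where
  "corner_simplex A t = {x. (\<forall>i\<in>A. 0 \<le> x i) \<and> sum x A \<le> t}"

lemma corner_simplex_measurable [measurable]:
  assumes "finite A"
  shows "corner_simplex A t \<inter> space (Pi\<^sub>M A (\<lambda>_. lborel)) \<in> sets (Pi\<^sub>M A (\<lambda>_. lborel))"
proof -
  have "corner_simplex A t \<inter> space (Pi\<^sub>M A (\<lambda>_. lborel)) =
      Pi\<^sub>E A (\<lambda>_. {0..}) \<inter> (\<lambda>x. sum x A) -` {..t} \<inter> space (Pi\<^sub>M A (\<lambda>_. lborel))"
    by (auto simp: corner_simplex_def space_PiM)
  also have "\<dots> \<in> sets (Pi\<^sub>M A (\<lambda>_. lborel))"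
    using assms by measurable
  finally show ?thesis .
qed

lemma nn_integral_power_mult_power_diff:
  fixes t C :: real
  assumes "t \<ge> 0" "C \<ge> 0"
  shows "(\<integral>\<^sup>+ y. ennreal (indicator {0..t} y * (y ^ p * (t - y) ^ m * C)) \<partial>lborel)
    = ennreal (C * (t ^ (p + m + 1) * fact p * fact m / fact (p + m + 1)))"
proof -
  have "(\<lambda>y. y ^ p * (t - y) ^ m) integrable_on {0..t}"
    by (intro integrable_continuous_interval continuous_intros)
  from integrable_integral[OF this]
  have "((\<lambda>y. y ^ p * (t - y) ^ m * C) has_integral
      (t ^ (p + m + 1) * fact p * fact m / fact (p + m + 1)) * C) {0..t}"
    unfolding integral_power_mult_power_diff[OF assms(1)] by (rule has_integral_mult_left)
  from nn_integral_has_integral_lebesgue[OF _ this] show ?thesis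
    using assms(2) by (simp add: ac_simps)
qed

lemma fun_upd_in_corner_simplex_iff:
  assumes "b \<notin> A" "finite A"
  shows "x(b := y) \<in> corner_simplex (insert b A) t \<longleftrightarrow> y \<in> {0..t} \<and> x \<in> corner_simplex A (t - y)"
  using assms sum_nonneg[of A x] unfolding corner_simplex_def
  by (force simp: sum_delta_notmem algebra_simps)

lemma dirichlet_integrand_fun_upd:
  fixes A :: "'i set" and t y :: real
  defines "S \<equiv> \<lambda>A t. corner_simplex A t \<inter> space (Pi\<^sub>M A (\<lambda>_. lborel :: real measure))"
  assumes "j \<notin> A" "finite A" "x \<in> space (Pi\<^sub>M A (\<lambda>_. lborel))"
  shows "indicator (S (insert j A) t) (x(j := y)) *
      ennreal ((\<Prod>i\<in>insert j A. (x(j := y)) i ^ a i) * (t - sum (x(j := y)) (insert j A)) ^ b)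
    = ennreal (indicator {0..t} y * y ^ a j) *
      (indicator (S A (t - y)) x * ennreal ((\<Prod>i\<in>A. x i ^ a i) * (t - y - sum x A) ^ b))"
proof -
  have "(\<Prod>i\<in>A. (x(j := y)) i ^ a i) = (\<Prod>i\<in>A. x i ^ a i)" "sum (x(j := y)) A = sum x A"
    using assms by (auto intro!: prod.cong sum.cong)
  moreover have "x(j := y) \<in> space (Pi\<^sub>M (insert j A) (\<lambda>_. lborel :: real measure))"
    using assms by (auto simp: space_PiM PiE_def extensional_def)
  ultimately show ?thesis
    using assms fun_upd_in_corner_simplex_iff[of j A x y t] by (auto simp: indicator_def ennreal_mult' algebra_simps)
qed

lemma nn_integral_dirichlet:
  fixes A :: "'i set" and a :: "'i \<Rightarrow> nat" and t :: real
  assumes "finite A" "t \<ge> 0"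
  shows "(\<integral>\<^sup>+ x. indicator (corner_simplex A t \<inter> space (Pi\<^sub>M A (\<lambda>_. lborel))) x *
            ennreal ((\<Prod>i\<in>A. x i ^ a i) * (t - sum x A) ^ b) \<partial>Pi\<^sub>M A (\<lambda>_. lborel))
       = ennreal (t ^ (sum a A + b + card A) * (\<Prod>i\<in>A. fact (a i)) * fact b / fact (sum a A + b + card A))"
  using assms
proof (induction arbitrary: t rule: finite_induct)
  case (empty t)
  thus ?case
    by (simp add: PiM_empty corner_simplex_def nn_integral_count_space_finite)
next
  case (insert j A t)
  let ?M = "\<lambda>A. Pi\<^sub>M A (\<lambda>_. lborel :: real measure)"
  let ?S = "\<lambda>A t. corner_simplex A t \<inter> space (?M A)"
  let ?f = "\<lambda>x t. ennreal ((\<Prod>i\<in>A. x i ^ a i) * (t - sum x A) ^ b)"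
  define N where "N = sum a A + b + card A"
  define C :: real where "C = (\<Prod>i\<in>A. fact (a i)) * fact b / fact N"
  interpret product_sigma_finite "\<lambda>_. lborel :: real measure" ..
  \<comment> \<open>integrate out the coordinate \<open>j\<close> last; the inner integral is the induction hypothesis at level \<open>t - y\<close>\<close>
  have "(\<integral>\<^sup>+ x. indicator (?S (insert j A) t) x *
            ennreal ((\<Prod>i\<in>insert j A. x i ^ a i) * (t - sum x (insert j A)) ^ b) \<partial>?M (insert j A))
     = (\<integral>\<^sup>+ y. \<integral>\<^sup>+ x. indicator (?S (insert j A) t) (x(j := y)) *
            ennreal ((\<Prod>i\<in>insert j A. (x(j := y)) i ^ a i) * (t - sum (x(j := y)) (insert j A)) ^ b) \<partial>?M A \<partial>lborel)"
    using insert.hyps by (intro product_nn_integral_insert_rev) auto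
  also have "\<dots> = (\<integral>\<^sup>+ y. \<integral>\<^sup>+ x. ennreal (indicator {0..t} y * y ^ a j) *
                     (indicator (?S A (t - y)) x * ?f x (t - y)) \<partial>?M A \<partial>lborel)"
    using insert.hyps by (intro nn_integral_cong dirichlet_integrand_fun_upd) auto
  also have "\<dots> = (\<integral>\<^sup>+ y. ennreal (indicator {0..t} y * y ^ a j) *
                     (\<integral>\<^sup>+ x. indicator (?S A (t - y)) x * ?f x (t - y) \<partial>?M A) \<partial>lborel)"
    using insert.hyps by (intro nn_integral_cong nn_integral_cmult) auto
  also have "\<dots> = (\<integral>\<^sup>+ y. ennreal (indicator {0..t} y * (y ^ a j * (t - y) ^ N * C)) \<partial>lborel)"
  proof (intro nn_integral_cong)
    fix y :: real
    show "ennreal (indicator {0..t} y * y ^ a j) * (\<integral>\<^sup>+ x. indicator (?S A (t - y)) x * ?f x (t - y) \<partial>?M A)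
        = ennreal (indicator {0..t} y * (y ^ a j * (t - y) ^ N * C))"
      using insert.IH[of "t - y"]
      by (cases "y \<in> {0..t}") (simp_all add: N_def C_def ennreal_mult'[symmetric] mult.assoc)
  qed
  also have "\<dots> = ennreal (C * (t ^ (a j + N + 1) * fact (a j) * fact N / fact (a j + N + 1)))"
    using insert.prems unfolding C_def
    by (intro nn_integral_power_mult_power_diff divide_nonneg_nonneg mult_nonneg_nonneg prod_nonneg) auto
  also have "C * (t ^ (a j + N + 1) * fact (a j) * fact N / fact (a j + N + 1)) =
      t ^ (sum a (insert j A) + b + card (insert j A)) * (\<Prod>i\<in>insert j A. fact (a i)) * fact b /
        fact (sum a (insert j A) + b + card (insert j A))"
    using insert.hyps by (simp add: C_def N_def algebra_simps)
  finally show ?case .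
qed

lemma has_bochner_integral_dirichlet:
  fixes A :: "'i set" and a :: "'i \<Rightarrow> nat"
  assumes "finite A"
  shows "has_bochner_integral (Pi\<^sub>M A (\<lambda>_. lborel))
    (\<lambda>x. indicator (corner_simplex A 1 \<inter> space (Pi\<^sub>M A (\<lambda>_. lborel))) x * ((\<Prod>i\<in>A. x i ^ a i) * (1 - sum x A) ^ b))
    ((\<Prod>i\<in>A. fact (a i)) * fact b / fact (sum a A + b + card A))"
proof (rule has_bochner_integral_nn_integral)
  show "AE x in Pi\<^sub>M A (\<lambda>_. lborel). 0 \<le> indicator (corner_simplex A 1 \<inter> space (Pi\<^sub>M A (\<lambda>_. lborel))) x *
      ((\<Prod>i\<in>A. x i ^ a i) * (1 - sum x A) ^ b)"
    by (intro AE_I2) (auto simp: indicator_def corner_simplex_def intro!: prod_nonneg mult_nonneg_nonneg)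
  show "(\<integral>\<^sup>+ x. ennreal (indicator (corner_simplex A 1 \<inter> space (Pi\<^sub>M A (\<lambda>_. lborel))) x *
      ((\<Prod>i\<in>A. x i ^ a i) * (1 - sum x A) ^ b)) \<partial>Pi\<^sub>M A (\<lambda>_. lborel)) =
      ennreal ((\<Prod>i\<in>A. fact (a i)) * fact b / fact (sum a A + b + card A))"
    using nn_integral_dirichlet[OF assms, of 1 a b] by (simp add: indicator_mult_ennreal mult.commute)
qed (use assms in \<open>auto intro!: divide_nonneg_nonneg mult_nonneg_nonneg prod_nonneg\<close>)

definition bary_monomial :: "nat \<Rightarrow> (nat \<Rightarrow> nat) \<Rightarrow> (nat \<Rightarrow> real) \<Rightarrow> real" where
  "bary_monomial l a x = (\<Prod>k=0..l. Lfun l k x ^ a k)"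

definition simplex_moment :: "nat \<Rightarrow> (nat \<Rightarrow> nat) \<Rightarrow> real" where
  "simplex_moment l a = (\<Prod>k=0..l. fact (a k)) / fact (sum a {0..l} + l)"

lemma atLeastAtMost_0_eq_insert: "{0..l} = insert (0::nat) {1..l}"
  by auto

lemma Lfun_measurable [measurable]: "Lfun l k \<in> borel_measurable (leb l)"
proof (cases "k = 0 \<or> k \<in> {1..l}")
  case False
  \<comment> \<open>for \<open>k > l\<close> the coordinate is \<open>undefined\<close> on the whole space\<close>
  hence "Lfun l k x = undefined" if "x \<in> space (leb l)" for x
    using that by (auto simp: Lfun_def leb_def space_PiM PiE_def extensional_def)
  thus ?thesis
    by (subst measurable_cong) auto
qed (auto simp: Lfun_def[abs_def] leb_def)

lemma bary_monomial_measurable [measurable]: "bary_monomial l a \<in> borel_measurable (leb l)"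
  unfolding bary_monomial_def by measurable

lemma Dsimplex_eq_corner_simplex: "Dsimplex l = corner_simplex {1..l} 1 \<inter> space (leb l)"
  unfolding Dsimplex_def corner_simplex_def by (auto simp: atLeastAtMost_0_eq_insert Lfun_def)

lemma Dsimplex_measurable [measurable]: "Dsimplex l \<in> sets (leb l)"
  unfolding Dsimplex_eq_corner_simplex leb_def by (rule corner_simplex_measurable) simp

lemma sum_Lfun: "(\<Sum>k=0..l. Lfun l k x) = 1"
proof -
  have "(\<Sum>k=1..l. Lfun l k x) = sum x {1..l}"
    by (intro sum.cong) (auto simp: Lfun_def)
  thus ?thesis
    unfolding atLeastAtMost_0_eq_insert by (simp add: Lfun_def)
qed

lemma bary_monomial_add: "bary_monomial l a x * bary_monomial l b x = bary_monomial l (\<lambda>k. a k + b k) x"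
  unfolding bary_monomial_def by (simp add: power_add prod.distrib)

lemma bary_monomial_zero: "bary_monomial l (\<lambda>_. 0) x = 1"
  by (simp add: bary_monomial_def)

lemma bary_monomial_unit:
  assumes "j \<le> l"
  shows "bary_monomial l (\<lambda>k. of_bool (k = j)) x = Lfun l j x"
proof -
  have "bary_monomial l (\<lambda>k. of_bool (k = j)) x = (\<Prod>k=0..l. if k = j then Lfun l k x else 1)"
    unfolding bary_monomial_def by (intro prod.cong) auto
  thus ?thesis
    using assms by simp
qed

lemma has_bochner_integral_bary_monomial:
  "has_bochner_integral (leb l) (\<lambda>x. indicator (Dsimplex l) x * bary_monomial l a x) (simplex_moment l a)"
proof -
  have "bary_monomial l a x = (\<Prod>i\<in>{1..l}. x i ^ a i) * (1 - sum x {1..l}) ^ a 0" for x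
  proof -
    have "(\<Prod>i\<in>{1..l}. Lfun l i x ^ a i) = (\<Prod>i\<in>{1..l}. x i ^ a i)"
      by (intro prod.cong) (auto simp: Lfun_def)
    thus ?thesis
      unfolding bary_monomial_def atLeastAtMost_0_eq_insert by (simp add: Lfun_def)
  qed
  moreover have "(\<Prod>i\<in>{1..l}. fact (a i)) * fact (a 0) / fact (sum a {1..l} + a 0 + card {1..l})
      = simplex_moment l a"
    unfolding simplex_moment_def atLeastAtMost_0_eq_insert by (simp add: ac_simps)
  ultimately show ?thesis
    using has_bochner_integral_dirichlet[of "{1..l}" a "a 0"]
    by (simp add: Dsimplex_eq_corner_simplex leb_def)
qed

definition facet_coords :: "nat \<Rightarrow> nat \<Rightarrow> nat set" where
  "facet_coords l j = {1..l} - {if j = 0 then l else j}"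

definition facet_slack :: "nat \<Rightarrow> nat \<Rightarrow> nat" where
  "facet_slack l j = (if j = 0 then l else 0)"

lemma facet_measure_eq: "facet_measure l j = Pi\<^sub>M (facet_coords l j) (\<lambda>_. lborel)"
  unfolding facet_measure_def facet_coords_def ..

lemma facet_coords_props:
  assumes "l \<ge> 1" "j \<le> l"
  shows "{0..l} = insert j (insert (facet_slack l j) (facet_coords l j))"
    and "j \<noteq> facet_slack l j" "j \<notin> facet_coords l j" "facet_slack l j \<notin> facet_coords l j"
    and "finite (facet_coords l j)" "card (facet_coords l j) = l - 1"
  using assms by (auto simp: facet_coords_def facet_slack_def)

lemma Lfun_facet_emb:
  assumes "l \<ge> 1" "j \<le> l" "k \<le> l"
  shows "Lfun l k (facet_emb l j y) =
    (if k = j then 0 else if k = facet_slack l j then 1 - sum y (facet_coords l j) else y k)"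
proof (cases "j = 0")
  case True
  have "sum (y(l := 1 - sum y {1..<l})) {1..l} = 1"
  proof -
    have "sum (y(l := 1 - sum y {1..<l})) {1..<l} = sum y {1..<l}"
      by (intro sum.cong) auto
    moreover have "{1..l} = insert l {1..<l}"
      using assms by auto
    ultimately show ?thesis
      by simp
  qed
  moreover have "facet_coords l j = {1..<l}"
    using True assms by (auto simp: facet_coords_def)
  ultimately show ?thesis
    using True assms by (auto simp: Lfun_def facet_emb_def facet_slack_def)
next
  case False
  have "sum (y(j := 0)) {1..l} = sum (y(j := 0)) (insert j (facet_coords l j))"
    using assms False by (intro sum.cong) (auto simp: facet_coords_def)
  also have "\<dots> = sum y (facet_coords l j)"
    by (auto simp: facet_coords_def intro!: sum.cong)
  finally show ?thesis
    using False by (auto simp: Lfun_def facet_emb_def facet_slack_def)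
qed

lemma facet_emb_in_space:
  assumes "l \<ge> 1" "j \<le> l" "y \<in> space (facet_measure l j)"
  shows "facet_emb l j y \<in> space (leb l)"
  using assms by (auto simp: leb_def facet_measure_def facet_emb_def space_PiM PiE_def extensional_def)

lemma indicator_mult_bary_monomial_facet_emb:
  assumes "l \<ge> 1" "j \<le> l" "y \<in> space (facet_measure l j)"
  defines "I \<equiv> facet_coords l j" and "s \<equiv> facet_slack l j"
  shows "indicator (Dsimplex l) (facet_emb l j y) * bary_monomial l a (facet_emb l j y) =
    of_bool (a j = 0) * (indicator (corner_simplex I 1 \<inter> space (facet_measure l j)) y *
      ((\<Prod>i\<in>I. y i ^ a i) * (1 - sum y I) ^ a s))"
proof -
  note I = facet_coords_props[OF assms(1,2), folded I_def s_def]
  have L: "Lfun l k (facet_emb l j y) = (if k = j then 0 else if k = s then 1 - sum y I else y k)"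
    if "k \<in> {0..l}" for k
    using Lfun_facet_emb[OF assms(1,2), of k] that by (simp add: I_def s_def)
  have "(\<Prod>i\<in>I. Lfun l i (facet_emb l j y) ^ a i) = (\<Prod>i\<in>I. y i ^ a i)"
    using I(1,3,4) L by (intro prod.cong) auto
  moreover have "Lfun l j (facet_emb l j y) = 0" "Lfun l s (facet_emb l j y) = 1 - sum y I"
    using L I(1,2) by auto
  ultimately have "bary_monomial l a (facet_emb l j y) = 0 ^ a j * ((1 - sum y I) ^ a s * (\<Prod>i\<in>I. y i ^ a i))"
    unfolding bary_monomial_def I(1) using I(2-5) by simp
  moreover have "facet_emb l j y \<in> Dsimplex l \<longleftrightarrow> y \<in> corner_simplex I 1"
    using facet_emb_in_space[OF assms(1-3)] I(1-4) L by (auto simp: Dsimplex_def corner_simplex_def)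
  ultimately show ?thesis
    using assms(3) by (simp add: indicator_def)
qed

lemma has_bochner_integral_bary_monomial_facet:
  assumes "l \<ge> 1" "j \<le> l"
  shows "has_bochner_integral (facet_measure l j)
     (\<lambda>y. indicator (Dsimplex l) (facet_emb l j y) * bary_monomial l a (facet_emb l j y))
     (if a j = 0 then simplex_moment l a * real (sum a {0..l} + l) else 0)"
proof -
  let ?I = "facet_coords l j" and ?s = "facet_slack l j"
  note I = facet_coords_props[OF assms]
  have "has_bochner_integral (facet_measure l j)
      (\<lambda>y. of_bool (a j = 0) * (indicator (corner_simplex ?I 1 \<inter> space (facet_measure l j)) y *
        ((\<Prod>i\<in>?I. y i ^ a i) * (1 - sum y ?I) ^ a ?s)))
      (of_bool (a j = 0) * ((\<Prod>i\<in>?I. fact (a i)) * fact (a ?s) / fact (sum a ?I + a ?s + card ?I)))"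
    unfolding facet_measure_eq by (intro has_bochner_integral_mult_right has_bochner_integral_dirichlet I)
  moreover have "of_bool (a j = 0) * ((\<Prod>i\<in>?I. fact (a i)) * fact (a ?s) / fact (sum a ?I + a ?s + card ?I))
      = (if a j = 0 then simplex_moment l a * real (sum a {0..l} + l) else 0)"
  proof (cases "a j = 0")
    case True
    hence "sum a {0..l} + l = Suc (sum a ?I + a ?s + card ?I)"
      "(\<Prod>k=0..l. fact (a k) :: real) = (\<Prod>i\<in>?I. fact (a i)) * fact (a ?s)"
      using I assms by auto
    thus ?thesis
      using True by (simp add: simplex_moment_def field_simps del: of_nat_Suc)
  qed simp
  ultimately show ?thesis
    using indicator_mult_bary_monomial_facet_emb[OF assms] by (subst has_bochner_integral_cong) auto
qed

definition bump :: "(nat \<Rightarrow> nat) \<Rightarrow> nat \<Rightarrow> nat \<Rightarrow> nat" where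
  "bump a k = a(k := Suc (a k))"

lemma bump_apply: "bump a k i = (if i = k then Suc (a k) else a i)"
  by (simp add: bump_def)

lemma bary_monomial_bump:
  assumes "k \<le> l"
  shows "bary_monomial l (bump a k) x = Lfun l k x * bary_monomial l a x"
proof -
  have "bump a k = (\<lambda>i. of_bool (i = k) + a i)"
    by (auto simp: bump_def)
  thus ?thesis
    using bary_monomial_add[of l "\<lambda>i. of_bool (i = k)" x a] bary_monomial_unit[OF assms] by simp
qed

lemma sum_bump:
  assumes "k \<le> l"
  shows "sum (bump a k) {0..l} = Suc (sum a {0..l})"
proof -
  have "sum (bump a k) {0..l} = Suc (a k) + sum a ({0..l} - {k})"
    using assms by (subst sum.remove[of _ k]) (auto simp: bump_def intro!: sum.cong)
  also have "\<dots> = Suc (sum a {0..l})"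
    using assms by (subst (2) sum.remove[of _ k]) auto
  finally show ?thesis .
qed

lemma weight_bump:
  assumes "k \<le> l"
  shows "(\<Sum>i=0..l. m i * (real (bump a k i) + 1)) = (\<Sum>i=0..l. m i * (real (a i) + 1)) + m k"
proof -
  have "(\<Sum>i=0..l. m i * (real (bump a k i) + 1)) = (\<Sum>i=0..l. m i * (real (a i) + 1) + (if i = k then m i else 0))"
    by (intro sum.cong) (auto simp: bump_apply algebra_simps)
  thus ?thesis
    using assms by (simp add: sum.distrib)
qed

lemma simplex_moment_bump:
  assumes "k \<le> l"
  shows "simplex_moment l (bump a k) = simplex_moment l a * (real (a k) + 1) / (real (sum a {0..l} + l) + 1)"
proof -
  have "(\<Prod>i=0..l. fact (bump a k i) :: real) = fact (Suc (a k)) * (\<Prod>i\<in>{0..l}-{k}. fact (a i))"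
    using assms by (subst prod.remove[of _ k]) (auto simp: bump_def intro!: prod.cong)
  also have "\<dots> = (real (a k) + 1) * (\<Prod>i=0..l. fact (a i))"
    using assms by (subst (2) prod.remove[of _ k]) (auto simp: algebra_simps)
  finally show ?thesis
    unfolding simplex_moment_def sum_bump[OF assms] by (simp add: field_simps)
qed

definition affine_form :: "nat \<Rightarrow> (nat \<Rightarrow> real) \<Rightarrow> real \<Rightarrow> (nat \<Rightarrow> real) \<Rightarrow> real" where
  "affine_form l m c x = c - (\<Sum>k=0..l. m k * Lfun l k x)"

lemma affine_form_measurable [measurable]: "affine_form l m c \<in> borel_measurable (leb l)"
  unfolding affine_form_def[abs_def] by measurable

definition affine_moment :: "nat \<Rightarrow> (nat \<Rightarrow> real) \<Rightarrow> real \<Rightarrow> (nat \<Rightarrow> nat) \<Rightarrow> real" where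
  "affine_moment l m c a = simplex_moment l a *
     (c - (\<Sum>k=0..l. m k * (real (a k) + 1)) / (real (sum a {0..l} + l) + 1))"

definition facet_affine_moment :: "nat \<Rightarrow> (nat \<Rightarrow> real) \<Rightarrow> real \<Rightarrow> (nat \<Rightarrow> nat) \<Rightarrow> nat \<Rightarrow> real" where
  "facet_affine_moment l m c a j = simplex_moment l a *
     (c * real (sum a {0..l} + l) - (\<Sum>k=0..l. m k * (real (a k) + 1)) + m j)"

lemma affine_form_mult_bary_monomial:
  "affine_form l m c x * bary_monomial l a x = c * bary_monomial l a x - (\<Sum>k=0..l. m k * bary_monomial l (bump a k) x)"
  by (simp add: affine_form_def bary_monomial_bump algebra_simps sum_distrib_left sum_distrib_right)

lemma has_bochner_integral_affine_combination:
  assumes "\<And>b. has_bochner_integral M (\<lambda>y. F y * bary_monomial l b (e y)) (V b)"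
  shows "has_bochner_integral M (\<lambda>y. F y * (affine_form l m c (e y) * bary_monomial l a (e y)))
    (c * V a - (\<Sum>k=0..l. m k * V (bump a k)))"
proof -
  have "has_bochner_integral M (\<lambda>y. c * (F y * bary_monomial l a (e y)) -
      (\<Sum>k=0..l. m k * (F y * bary_monomial l (bump a k) (e y)))) (c * V a - (\<Sum>k=0..l. m k * V (bump a k)))"
    by (intro has_bochner_integral_diff has_bochner_integral_sum has_bochner_integral_mult_right assms)
  thus ?thesis
    unfolding affine_form_mult_bary_monomial by (simp add: algebra_simps sum_distrib_left)
qed

lemma simplex_moment_bump_mult:
  assumes "k \<le> l"
  shows "simplex_moment l (bump a k) * real (sum (bump a k) {0..l} + l) = simplex_moment l a * (real (a k) + 1)"
proof -
  have "real (sum (bump a k) {0..l} + l) = real (sum a {0..l} + l) + 1"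
    using sum_bump[OF assms] by simp
  moreover have "real (sum a {0..l} + l) + 1 \<noteq> 0"
    by (metis add_nonneg_pos of_nat_0_le_iff zero_less_one less_irrefl)
  ultimately show ?thesis
    unfolding simplex_moment_bump[OF assms] by (simp del: of_nat_add)
qed

lemma has_bochner_integral_affine_monomial:
  "has_bochner_integral (leb l) (\<lambda>x. indicator (Dsimplex l) x * (affine_form l m c x * bary_monomial l a x))
    (affine_moment l m c a)"
proof -
  let ?N = "real (sum a {0..l} + l) + 1"
  have "(\<Sum>k=0..l. m k * simplex_moment l (bump a k)) = (\<Sum>k=0..l. simplex_moment l a / ?N * (m k * (real (a k) + 1)))"
    by (intro sum.cong refl) (simp add: simplex_moment_bump)
  also have "\<dots> = simplex_moment l a * ((\<Sum>k=0..l. m k * (real (a k) + 1)) / ?N)"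
    by (simp only: sum_distrib_left[symmetric]) simp
  finally have "c * simplex_moment l a - (\<Sum>k=0..l. m k * simplex_moment l (bump a k)) = affine_moment l m c a"
    unfolding affine_moment_def by (simp only: right_diff_distrib mult.commute)
  moreover have "has_bochner_integral (leb l)
      (\<lambda>x. indicator (Dsimplex l) x * (affine_form l m c x * bary_monomial l a x))
      (c * simplex_moment l a - (\<Sum>k=0..l. m k * simplex_moment l (bump a k)))"
    by (rule has_bochner_integral_affine_combination[where e = "\<lambda>x. x"])
      (rule has_bochner_integral_bary_monomial)
  ultimately show ?thesis
    by simp
qed

lemma has_bochner_integral_affine_monomial_facet:
  assumes "l \<ge> 1" "j \<le> l"
  shows "has_bochner_integral (facet_measure l j)
    (\<lambda>y. indicator (Dsimplex l) (facet_emb l j y) * (affine_form l m c (facet_emb l j y) * bary_monomial l a (facet_emb l j y)))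
    (if a j = 0 then facet_affine_moment l m c a j else 0)"
proof -
  let ?V = "\<lambda>b. if b j = 0 then simplex_moment l b * real (sum b {0..l} + l) else 0"
  have "c * ?V a - (\<Sum>k=0..l. m k * ?V (bump a k)) = (if a j = 0 then facet_affine_moment l m c a j else 0)"
  proof (cases "a j = 0")
    case True
    \<comment> \<open>only the bumps in directions \<open>k \<noteq> j\<close> stay on the facet \<open>L\<^sub>j = 0\<close>\<close>
    have "m k * ?V (bump a k) =
        simplex_moment l a * (m k * (real (a k) + 1)) - (if k = j then simplex_moment l a * m j else 0)"
      if "k \<in> {0..l}" for k
    proof (cases "k = j")
      case False
      thus ?thesis
        using True that simplex_moment_bump_mult[of k l a] by (simp add: bump_apply)
    qed (simp add: True bump_apply)
    hence "(\<Sum>k=0..l. m k * ?V (bump a k)) =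
        simplex_moment l a * (\<Sum>k=0..l. m k * (real (a k) + 1)) - simplex_moment l a * m j"
      using assms by (simp add: sum_subtractf sum_distrib_left)
    thus ?thesis
      using True by (simp add: facet_affine_moment_def algebra_simps)
  next
    case False
    hence "?V (bump a k) = 0" for k
      by (simp add: bump_apply split: if_split)
    thus ?thesis
      using False by simp
  qed
  moreover have "has_bochner_integral (facet_measure l j)
    (\<lambda>y. indicator (Dsimplex l) (facet_emb l j y) * (affine_form l m c (facet_emb l j y) * bary_monomial l a (facet_emb l j y)))
    (c * ?V a - (\<Sum>k=0..l. m k * ?V (bump a k)))"
    by (rule has_bochner_integral_affine_combination) (rule has_bochner_integral_bary_monomial_facet[OF assms])
  ultimately show ?thesis
    by simp
qed

lemma boundary_integral_affine_monomial:
  assumes "l \<ge> 1"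
  shows "bdry_integral l (\<lambda>x. affine_form l m c x * bary_monomial l a x) =
    (\<Sum>j=0..l. if a j = 0 then facet_affine_moment l m c a j else 0)"
  unfolding bdry_integral_def facet_integral_def
  using assms by (intro sum.cong refl has_bochner_integral_integral_eq has_bochner_integral_affine_monomial_facet) auto

lemma affine_moment_unbump:
  assumes "k \<le> l" "b k \<ge> 1"
  shows "real (b k) * affine_moment l m c (b(k := b k - 1)) = facet_affine_moment l m c b k"
proof -
  let ?a = "b(k := b k - 1)"
  define D where "D = simplex_moment l ?a"
  define N where "N = real (sum ?a {0..l} + l) + 1"
  define W where "W = (\<Sum>i=0..l. m i * (real (?a i) + 1))"
  have b: "b = bump ?a k"
    using assms by (auto simp: bump_def)
  have "facet_affine_moment l m c b k = D * (real (?a k) + 1) / N * (c * N - W)"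
    unfolding D_def N_def W_def
    by (subst (1 2 3 4) b) (simp add: facet_affine_moment_def simplex_moment_bump[OF assms(1)]
        sum_bump[OF assms(1)] weight_bump[OF assms(1)])
  also have "real (?a k) + 1 = real (b k)"
    using assms by simp
  finally have facet: "facet_affine_moment l m c b k = D * real (b k) / N * (c * N - W)" .
  have interior: "affine_moment l m c ?a = D * (c - W / N)"
    unfolding affine_moment_def D_def N_def W_def ..
  have "N > 0"
    unfolding N_def by (metis add_nonneg_pos of_nat_0_le_iff zero_less_one)
  thus ?thesis
    unfolding facet interior by (simp add: field_simps)
qed

lemma AE_PiM_coordinate_neq:
  fixes I :: "'i set" and \<phi> :: "('i \<Rightarrow> real) \<Rightarrow> real"
  assumes "finite I" "i \<in> I"
    and \<phi>: "\<phi> \<in> borel_measurable (Pi\<^sub>M I (\<lambda>_. lborel))"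
    and indep: "\<And>x y. \<phi> (x(i := y)) = \<phi> x"
  shows "AE x in Pi\<^sub>M I (\<lambda>_. lborel). x i \<noteq> \<phi> x"
proof -
  let ?M = "\<lambda>I. Pi\<^sub>M I (\<lambda>_. lborel :: real measure)"
  let ?N = "{x\<in>space (?M I). x i = \<phi> x}"
  interpret product_sigma_finite "\<lambda>_. lborel :: real measure" ..
  have I: "insert i (I - {i}) = I"
    using assms by auto
  have N: "?N \<in> sets (?M I)"
    using assms by measurable
  \<comment> \<open>by Fubini, integrating first along coordinate \<open>i\<close>, each fibre of \<open>?N\<close> is a single point\<close>
  have "emeasure (?M I) ?N = (\<integral>\<^sup>+ x. \<integral>\<^sup>+ y. indicator ?N (x(i := y)) \<partial>lborel \<partial>?M (I - {i}))"
    using product_nn_integral_insert[of "I - {i}" i "indicator ?N"] assms N I by (simp add: nn_integral_indicator)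
  also have "\<dots> = (\<integral>\<^sup>+ x. \<integral>\<^sup>+ y. indicator {\<phi> x} y \<partial>lborel \<partial>?M (I - {i}))"
  proof (intro nn_integral_cong)
    fix x y assume x: "x \<in> space (?M (I - {i}))"
    hence "x(i := y) \<in> space (?M I)"
      using assms by (auto simp: space_PiM PiE_def extensional_def)
    thus "indicator ?N (x(i := y)) = (indicator {\<phi> x} y :: ennreal)"
      using indep by (auto simp: indicator_def)
  qed
  finally show ?thesis
    by (subst AE_iff_measurable[OF N]) auto
qed

lemma AE_Lfun_nonzero:
  assumes "l \<ge> 1"
  shows "AE x in leb l. \<forall>k\<in>{0..l}. Lfun l k x \<noteq> 0"
proof (rule AE_finite_allI)
  fix k assume k: "k \<in> {0..l}"
  show "AE x in leb l. Lfun l k x \<noteq> 0"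
  proof (cases "k = 0")
    case True
    \<comment> \<open>\<open>L\<^sub>0 = 0\<close> means \<open>x\<^sub>1 = 1 - (x\<^sub>2 + \<dots> + x\<^sub>l)\<close>\<close>
    let ?\<phi> = "\<lambda>x::nat \<Rightarrow> real. 1 - sum x ({1..l} - {1})"
    have "AE x in leb l. x 1 \<noteq> ?\<phi> x"
      unfolding leb_def using assms by (intro AE_PiM_coordinate_neq) (auto intro!: sum.cong)
    moreover have "sum x {1..l} = x 1 + sum x ({1..l} - {1})" for x :: "nat \<Rightarrow> real"
      using assms by (subst sum.remove[of _ 1]) auto
    ultimately show ?thesis
      using True by (auto simp: Lfun_def elim!: eventually_mono)
  next
    case False
    hence "AE x in leb l. x k \<noteq> 0"
      unfolding leb_def using k by (intro AE_PiM_coordinate_neq[where \<phi> = "\<lambda>_. 0"]) auto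
    thus ?thesis
      using False by (auto simp: Lfun_def elim!: eventually_mono)
  qed
qed simp

lemma affine_form_pos:
  assumes "x \<in> Dsimplex l" "\<forall>k\<in>{0..l}. Lfun l k x \<noteq> 0" "\<forall>k\<in>{0..l}. m k < c"
  shows "affine_form l m c x > 0"
proof -
  have "(\<Sum>k=0..l. (c - m k) * Lfun l k x) = c * (\<Sum>k=0..l. Lfun l k x) - (\<Sum>k=0..l. m k * Lfun l k x)"
    by (simp add: left_diff_distrib sum_subtractf sum_distrib_left)
  hence "affine_form l m c x = (\<Sum>k=0..l. (c - m k) * Lfun l k x)"
    by (simp add: affine_form_def sum_Lfun)
  also have "\<dots> > 0"
    using assms by (intro sum_pos) (force simp: Dsimplex_def)+
  finally show ?thesis .
qed

lemma pole_and_facet_terms_eq: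
  assumes "k \<le> l" "q \<ge> 1" "s \<le> 1" "b k = q - 1 + s"
  shows "(if 2 \<le> q then real q * (real q - 1) * affine_moment l m c (b(k := b k - 1)) else 0)
      + (if b k = 0 then facet_affine_moment l m c b k else 0)
    = (real q - real s) * facet_affine_moment l m c b k"
proof (cases "2 \<le> q")
  case True
  hence "real (b k) * affine_moment l m c (b(k := b k - 1)) = facet_affine_moment l m c b k"
    using assms by (intro affine_moment_unbump) auto
  moreover have "real q * (real q - 1) = (real q - real s) * real (b k)"
    using assms True by (cases s) (auto simp: of_nat_diff algebra_simps)
  ultimately show ?thesis
    using True assms by (simp add: mult.assoc)
next
  case False
  thus ?thesis
    using assms by (cases s) auto
qed

lemma fact_add_eq_fact_mult_pochhammer: "fact (n + m) = fact n * pochhammer (of_nat n + 1) m"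
  unfolding pochhammer_fact pochhammer_product' by (simp add: add_ac)

lemma prod_pochhammer_unit:
  assumes "j \<in> A" "finite A"
  shows "(\<Prod>i\<in>A. pochhammer (x i) (of_bool (i = j))) = x j"
proof -
  have "(\<Prod>i\<in>A. pochhammer (x i) (of_bool (i = j))) = (\<Prod>i\<in>A. if i = j then x i else 1)"
    by (intro prod.cong) auto
  thus ?thesis
    using assms by simp
qed

lemma sum_of_bool_eq:
  assumes "j \<in> A" "finite A"
  shows "(\<Sum>k\<in>A. of_bool (k = j)) = (1 :: 'a :: comm_semiring_1)"
  using assms by (simp add: of_bool_def)

lemma sum_mult_of_bool_eq:
  fixes f :: "'i \<Rightarrow> 'a :: comm_semiring_1"
  assumes "j \<in> A" "finite A"
  shows "(\<Sum>k\<in>A. f k * of_bool (k = j)) = f j"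
proof -
  have "(\<Sum>k\<in>A. f k * of_bool (k = j)) = (\<Sum>k\<in>A. if k = j then f k else 0)"
    by (intro sum.cong) auto
  thus ?thesis
    using assms by simp
qed

lemma prod_pochhammer_two_units:
  fixes x :: "'i \<Rightarrow> 'a :: comm_semiring_1"
  assumes "j \<in> A" "k \<in> A" "finite A"
  shows "(\<Prod>i\<in>A. pochhammer (x i) (of_bool (i = j) + of_bool (i = k))) = x j * (x k + of_bool (j = k))"
proof -
  have "(\<Prod>i\<in>A. pochhammer (x i) (of_bool (i = j) + of_bool (i = k))) =
      (\<Prod>i\<in>A. pochhammer (x i) (of_bool (i = j))) * (\<Prod>i\<in>A. pochhammer (x i + of_bool (i = j)) (of_bool (i = k)))"
    by (simp add: pochhammer_product' prod.distrib)
  thus ?thesis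
    using assms by (simp add: prod_pochhammer_unit)
qed

lemma set_integral_eq_of_has_bochner_integral:
  "has_bochner_integral M (\<lambda>x. indicator A x * f x) v \<Longrightarrow> (LINT x:A|M. f x) = (v :: real)"
  unfolding set_lebesgue_integral_def by (simp add: has_bochner_integral_integral_eq)

lemma Qfun_measurable [measurable]: "Qfun l r d g c \<in> borel_measurable (leb l)"
  unfolding Qfun_def[abs_def] by measurable

lemma pc_measurable [measurable]: "pc l r d c \<in> borel_measurable (leb l)"
  unfolding pc_def[abs_def] by measurable

context
  fixes l :: nat and r :: "nat \<Rightarrow> nat" and d :: "nat \<Rightarrow> int" and c :: real
  assumes l_ge_1: "l \<ge> 1" and r_ge_1: "\<forall>k\<in>{0..l}. r k \<ge> 1"
begin

lemma bary_monomial_mult_pc: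
  "bary_monomial l t x * pc l r d c x = affine_form l (mu r d) c x * bary_monomial l (\<lambda>k. r k - 1 + t k) x"
proof -
  have "pc l r d c x = affine_form l (mu r d) c x * bary_monomial l (\<lambda>k. r k - 1) x"
    by (simp add: pc_def affine_form_def bary_monomial_def)
  thus ?thesis
    using bary_monomial_add[of l t x "\<lambda>k. r k - 1"] by (simp add: add.commute mult.left_commute)
qed

lemma rV_eq_sum_exponents: "rV l r = (\<Sum>k=0..l. r k - 1) + l + 1"
proof -
  have "rV l r = (\<Sum>k=0..l. (r k - 1) + 1)"
    unfolding rV_def using r_ge_1 by (intro sum.cong refl) (metis atLeastAtMost_iff le_add_diff_inverse2)
  thus ?thesis
    by (simp add: sum_Suc)
qed

lemma sum_shifted_exponents: "sum (\<lambda>k. r k - 1 + t k) {0..l} + l = rV l r - 1 + sum t {0..l}"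
  using rV_eq_sum_exponents by (simp add: sum.distrib)

lemma rV_ge_2: "rV l r \<ge> 2"
  using rV_eq_sum_exponents l_ge_1 by linarith

lemma weight_shifted:
  "(\<Sum>k=0..l. mu r d k * (real (r k - 1 + t k) + 1)) = real_of_int (dV l d) + (\<Sum>k=0..l. mu r d k * real (t k))"
proof -
  have "mu r d k * (real (r k - 1 + t k) + 1) = real_of_int (d k) + mu r d k * real (t k)" if "k \<in> {0..l}" for k
  proof -
    have "r k \<ge> 1"
      using r_ge_1 that by blast
    hence "real (r k - 1 + t k) + 1 = real (r k) + real (t k)"
      by simp
    thus ?thesis
      using \<open>r k \<ge> 1\<close> by (simp add: mu_def field_simps)
  qed
  thus ?thesis
    unfolding dV_def by (simp add: sum.distrib)
qed

lemma simplex_moment_shifted: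
  "simplex_moment l (\<lambda>k. r k - 1 + t k) =
    piR l r * (\<Prod>k=0..l. pochhammer (real (r k)) (t k)) / fact (rV l r - 1 + sum t {0..l})"
proof -
  have "(fact (r k - 1 + t k) :: real) = fact (r k - 1) * pochhammer (real (r k)) (t k)" if "k \<in> {0..l}" for k
  proof -
    have "r k \<ge> 1"
      using r_ge_1 that by blast
    thus ?thesis
      by (subst fact_add_eq_fact_mult_pochhammer) simp
  qed
  thus ?thesis
    unfolding simplex_moment_def sum_shifted_exponents piR_def by (simp add: prod.distrib)
qed

lemma set_integral_bary_monomial_pc:
  "(LINT x:Dsimplex l|leb l. bary_monomial l t x * pc l r d c x) =
    piR l r * (\<Prod>k=0..l. pochhammer (real (r k)) (t k)) / fact (rV l r + sum t {0..l}) *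
    (c * (real (rV l r) + real (sum t {0..l})) - real_of_int (dV l d) - (\<Sum>k=0..l. mu r d k * real (t k)))"
proof -
  define P where "P = piR l r * (\<Prod>k=0..l. pochhammer (real (r k)) (t k))"
  define n where "n = rV l r - 1 + sum t {0..l}"
  have n: "rV l r + sum t {0..l} = Suc n" "real (rV l r) + real (sum t {0..l}) = real n + 1"
    using rV_ge_2 by (auto simp: n_def)
  have "(LINT x:Dsimplex l|leb l. bary_monomial l t x * pc l r d c x) =
      affine_moment l (mu r d) c (\<lambda>k. r k - 1 + t k)"
    unfolding bary_monomial_mult_pc by (intro set_integral_eq_of_has_bochner_integral has_bochner_integral_affine_monomial)
  also have "\<dots> = P / fact n * (c - (real_of_int (dV l d) + (\<Sum>k=0..l. mu r d k * real (t k))) / (real n + 1))"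
    unfolding affine_moment_def simplex_moment_shifted sum_shifted_exponents weight_shifted P_def n_def ..
  also have "\<dots> = P / fact (Suc n) * (c * (real n + 1) - real_of_int (dV l d) - (\<Sum>k=0..l. mu r d k * real (t k)))"
    by (simp add: field_simps)
  finally show ?thesis
    unfolding P_def n by simp
qed

lemma Qfun_bary_monomial_pc_eq:
  fixes t :: "nat \<Rightarrow> nat"
  assumes mu_less: "\<forall>k\<in>{0..l}. mu r d k < c"
    and x: "x \<in> Dsimplex l" and nz: "\<forall>k\<in>{0..l}. Lfun l k x \<noteq> 0"
  defines "b \<equiv> \<lambda>k. r k - 1 + t k"
  shows "Qfun l r d g c x * bary_monomial l t x * pc l r d c x =
    2 * (1 - real g) * bary_monomial l b x +
    (\<Sum>k\<in>{k\<in>{0..l}. r k \<ge> 2}. real (r k) * (real (r k) - 1) *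
      (affine_form l (mu r d) c x * bary_monomial l (b(k := b k - 1)) x))"
proof -
  let ?K = "{k\<in>{0..l}. r k \<ge> 2}"
  let ?E = "affine_form l (mu r d) c x"
  have "?E > 0"
    using affine_form_pos[OF x nz mu_less] .
  have "real (r k) * (real (r k) - 1) / Lfun l k x * (?E * bary_monomial l b x) =
      real (r k) * (real (r k) - 1) * (?E * bary_monomial l (b(k := b k - 1)) x)" if k: "k \<in> ?K" for k
  proof -
    have "b = bump (b(k := b k - 1)) k"
      using k by (auto simp: b_def bump_def fun_eq_iff)
    hence "bary_monomial l b x = Lfun l k x * bary_monomial l (b(k := b k - 1)) x"
      using k by (metis bary_monomial_bump mem_Collect_eq atLeastAtMost_iff)
    thus ?thesis
      using k nz by simp
  qed
  hence "(\<Sum>k\<in>?K. real (r k) * (real (r k) - 1) / Lfun l k x) * (?E * bary_monomial l b x) =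
      (\<Sum>k\<in>?K. real (r k) * (real (r k) - 1) * (?E * bary_monomial l (b(k := b k - 1)) x))"
    unfolding sum_distrib_right by (rule sum.cong[OF refl])
  moreover have "Qfun l r d g c x = 2 * (1 - real g) / ?E + (\<Sum>k\<in>?K. real (r k) * (real (r k) - 1) / Lfun l k x)"
    unfolding Qfun_def affine_form_def ..
  ultimately show ?thesis
    using \<open>?E > 0\<close> by (simp add: mult.assoc bary_monomial_mult_pc b_def distrib_right)
qed

lemma set_integral_Qfun_bary_monomial_pc:
  fixes t :: "nat \<Rightarrow> nat"
  assumes mu_less: "\<forall>k\<in>{0..l}. mu r d k < c"
  defines "b \<equiv> \<lambda>k. r k - 1 + t k"
  shows "(LINT x:Dsimplex l|leb l. Qfun l r d g c x * bary_monomial l t x * pc l r d c x) =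
    2 * (1 - real g) * simplex_moment l b +
    (\<Sum>k\<in>{k\<in>{0..l}. r k \<ge> 2}. real (r k) * (real (r k) - 1) * affine_moment l (mu r d) c (b(k := b k - 1)))"
proof (rule set_integral_eq_of_has_bochner_integral)
  let ?K = "{k\<in>{0..l}. r k \<ge> 2}"
  let ?E = "affine_form l (mu r d) c"
  let ?h = "\<lambda>x. indicator (Dsimplex l) x * (2 * (1 - real g) * bary_monomial l b x +
      (\<Sum>k\<in>?K. real (r k) * (real (r k) - 1) * (?E x * bary_monomial l (b(k := b k - 1)) x)))"
  have ae: "AE x in leb l. indicator (Dsimplex l) x * (Qfun l r d g c x * bary_monomial l t x * pc l r d c x) = ?h x"
    using AE_Lfun_nonzero[OF l_ge_1]
    by (auto simp: indicator_def b_def Qfun_bary_monomial_pc_eq[OF mu_less] elim!: eventually_mono)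
  have h_eq: "?h = (\<lambda>x. 2 * (1 - real g) * (indicator (Dsimplex l) x * bary_monomial l b x) +
      (\<Sum>k\<in>?K. real (r k) * (real (r k) - 1) *
        (indicator (Dsimplex l) x * (?E x * bary_monomial l (b(k := b k - 1)) x))))"
    by (simp add: fun_eq_iff algebra_simps sum_distrib_left)
  have "has_bochner_integral (leb l) ?h (2 * (1 - real g) * simplex_moment l b +
      (\<Sum>k\<in>?K. real (r k) * (real (r k) - 1) * affine_moment l (mu r d) c (b(k := b k - 1))))"
    unfolding h_eq
    by (intro has_bochner_integral_add has_bochner_integral_sum has_bochner_integral_mult_right
        has_bochner_integral_bary_monomial has_bochner_integral_affine_monomial)
  moreover have "has_bochner_integral (leb l)
      (\<lambda>x. indicator (Dsimplex l) x * (Qfun l r d g c x * bary_monomial l t x * pc l r d c x)) =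
      has_bochner_integral (leb l) ?h"
    by (rule ext, rule has_bochner_integral_cong_AE[OF _ _ ae]) measurable
  ultimately show "has_bochner_integral (leb l)
      (\<lambda>x. indicator (Dsimplex l) x * (Qfun l r d g c x * bary_monomial l t x * pc l r d c x))
      (2 * (1 - real g) * simplex_moment l b +
       (\<Sum>k\<in>?K. real (r k) * (real (r k) - 1) * affine_moment l (mu r d) c (b(k := b k - 1))))"
    by simp
qed

lemma sum_r_mult_mu: "(\<Sum>k=0..l. real (r k) * mu r d k) = real_of_int (dV l d)"
  unfolding dV_def of_int_sum using r_ge_1 by (intro sum.cong refl) (force simp: mu_def)

lemma beta_moment:
  fixes t :: "nat \<Rightarrow> nat"
  assumes mu_less: "\<forall>k\<in>{0..l}. mu r d k < c" and t_le_1: "\<forall>k\<in>{0..l}. t k \<le> 1"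
  defines "S \<equiv> \<Sum>k=0..l. mu r d k * real (t k)"
  shows "(LINT x:Dsimplex l|leb l. Qfun l r d g c x * bary_monomial l t x * pc l r d c x)
      + bdry_integral l (\<lambda>x. bary_monomial l t x * pc l r d c x)
    = piR l r * (\<Prod>k=0..l. pochhammer (real (r k)) (t k)) / fact (rV l r - 1 + sum t {0..l}) *
      (2 * (1 - real g) + (real (rV l r) - real (sum t {0..l})) *
        (c * (real (rV l r) - 1 + real (sum t {0..l})) - real_of_int (dV l d) - S)
       + real_of_int (dV l d) - S)"
proof -
  let ?b = "\<lambda>k. r k - 1 + t k"
  define D where "D = simplex_moment l ?b"
  define X where "X = c * (real (rV l r) - 1 + real (sum t {0..l})) - real_of_int (dV l d) - S"
  have facet: "facet_affine_moment l (mu r d) c ?b k = D * (X + mu r d k)" for k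
    using rV_ge_2 unfolding facet_affine_moment_def D_def X_def S_def sum_shifted_exponents weight_shifted
    by (simp add: of_nat_diff algebra_simps)
  have "(LINT x:Dsimplex l|leb l. Qfun l r d g c x * bary_monomial l t x * pc l r d c x)
      + bdry_integral l (\<lambda>x. bary_monomial l t x * pc l r d c x)
    = 2 * (1 - real g) * D + (\<Sum>k=0..l.
        (if 2 \<le> r k then real (r k) * (real (r k) - 1) * affine_moment l (mu r d) c (?b(k := ?b k - 1)) else 0)
        + (if ?b k = 0 then facet_affine_moment l (mu r d) c ?b k else 0))"
    unfolding set_integral_Qfun_bary_monomial_pc[OF mu_less] bary_monomial_mult_pc
      boundary_integral_affine_monomial[OF l_ge_1] sum.distrib sum.inter_filter[OF finite_atLeastAtMost]
    by (simp add: D_def)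
  also have "\<dots> = 2 * (1 - real g) * D + (\<Sum>k=0..l. (real (r k) - real (t k)) * (D * (X + mu r d k)))"
    using r_ge_1 t_le_1 unfolding facet[symmetric]
    by (intro arg_cong2[where f = "(+)"] refl sum.cong pole_and_facet_terms_eq) auto
  also have "(\<Sum>k=0..l. (real (r k) - real (t k)) * (D * (X + mu r d k))) =
      D * ((\<Sum>k=0..l. real (r k)) * X - (\<Sum>k=0..l. real (t k)) * X + (\<Sum>k=0..l. real (r k) * mu r d k) - S)"
    unfolding S_def by (simp add: algebra_simps sum.distrib sum_subtractf sum_distrib_left sum_distrib_right)
  also have "\<dots> = D * ((real (rV l r) - real (sum t {0..l})) * X + real_of_int (dV l d) - S)"
    unfolding sum_r_mult_mu by (simp add: rV_def algebra_simps)
  finally show ?thesis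
    unfolding X_def[symmetric] D_def[unfolded simplex_moment_shifted, symmetric] by (simp add: algebra_simps)
qed

lemma alpha0_eq: "alpha0 l r d c = piR l r / fact (rV l r) * (c * real (rV l r) - real_of_int (dV l d))"
  using set_integral_bary_monomial_pc[of "\<lambda>_. 0"] by (simp add: alpha0_def bary_monomial_zero)

lemma alpha1_eq:
  assumes "j \<in> {1..l}"
  shows "alpha1 l r d c j = piR l r / fact (rV l r + 1) * real (r j) *
    (c * (real (rV l r) + 1) - real_of_int (dV l d) - mu r d j)"
proof -
  have "bary_monomial l (\<lambda>k. of_bool (k = j)) x = x j" for x
    using assms bary_monomial_unit[of j l x] by (simp add: Lfun_def)
  moreover have "(\<Prod>k=0..l. pochhammer (real (r k)) (of_bool (k = j))) = real (r j)"
    using assms by (intro prod_pochhammer_unit) auto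
  ultimately show ?thesis
    using assms set_integral_bary_monomial_pc[of "\<lambda>k. of_bool (k = j)"]
    by (simp add: alpha1_def sum_of_bool_eq sum_mult_of_bool_eq)
qed

lemma alpha2_eq:
  assumes "j \<in> {1..l}" "k \<in> {1..l}"
  shows "alpha2 l r d c j k = piR l r / fact (rV l r + 2) * real (r j) * (real (r k) + of_bool (j = k)) *
    (c * (real (rV l r) + 2) - real_of_int (dV l d) - mu r d j - mu r d k)"
proof -
  have "bary_monomial l (\<lambda>i. of_bool (i = j) + of_bool (i = k)) x = x j * x k" for x
    using assms bary_monomial_unit[of j l x] bary_monomial_unit[of k l x]
    by (simp add: Lfun_def bary_monomial_add[symmetric])
  moreover have "(\<Prod>i=0..l. pochhammer (real (r i)) (of_bool (i = j) + of_bool (i = k))) =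
      real (r j) * (real (r k) + of_bool (j = k))"
    using assms by (intro prod_pochhammer_two_units) auto
  moreover have "(\<Sum>i=0..l. mu r d i * real (of_bool (i = j) + of_bool (i = k))) = mu r d j + mu r d k"
    using assms by (simp add: distrib_left sum.distrib sum_mult_of_bool_eq)
  ultimately show ?thesis
    using assms set_integral_bary_monomial_pc[of "\<lambda>i. of_bool (i = j) + of_bool (i = k)"]
    by (simp add: alpha2_def sum.distrib sum_of_bool_eq mult_ac)
qed

lemma beta0_eq:
  assumes "\<forall>k\<in>{0..l}. mu r d k < c"
  shows "beta0 l r d g c = piR l r / fact (rV l r - 1) *
    ((real (rV l r) - 1) * real (rV l r) * c + 2 * (1 - real g) - (real (rV l r) - 1) * real_of_int (dV l d))"
  using beta_moment[OF assms, of "\<lambda>_. 0"] by (simp add: beta0_def bary_monomial_zero algebra_simps)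

lemma beta1_eq:
  assumes "\<forall>k\<in>{0..l}. mu r d k < c" "j \<in> {1..l}"
  shows "beta1 l r d g c j = piR l r * real (r j) / fact (rV l r) *
    (real (rV l r) * (real (rV l r) - 1) * c + 2 * (1 - real g)
     - real_of_int (dV l d) * (real (rV l r) - 2) - real (rV l r) * mu r d j)"
proof -
  have "bary_monomial l (\<lambda>k. of_bool (k = j)) x = x j" for x
    using assms bary_monomial_unit[of j l x] by (simp add: Lfun_def)
  moreover have "(\<Prod>k=0..l. pochhammer (real (r k)) (of_bool (k = j))) = real (r j)"
    using assms by (intro prod_pochhammer_unit) auto
  moreover have "rV l r - 1 + 1 = rV l r"
    using rV_ge_2 by simp
  ultimately show ?thesis
    using assms beta_moment[OF assms(1), of "\<lambda>k. of_bool (k = j)"]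
    by (simp add: beta1_def sum_of_bool_eq sum_mult_of_bool_eq algebra_simps)
qed

end

theorem proposition3p9:
  fixes l g :: nat and r :: "nat \<Rightarrow> nat" and d :: "nat \<Rightarrow> int" and c :: real
  assumes "l \<ge> 1"
    and "\<forall>k\<in>{0..l}. r k \<ge> 1"
    and "\<forall>k\<in>{0..l}. mu r d k < c"
  shows "alpha0 l r d c = piR l r / fact (rV l r) * (c * real (rV l r) - real_of_int (dV l d))
    \<and> beta0 l r d g c = piR l r / fact (rV l r - 1) *
        ((real (rV l r) - 1) * real (rV l r) * c + 2 * (1 - real g)
         - (real (rV l r) - 1) * real_of_int (dV l d))
    \<and> (\<forall>j\<in>{1..l}.
        alpha1 l r d c j = piR l r / fact (rV l r + 1) * real (r j) *
           (c * (real (rV l r) + 1) - real_of_int (dV l d) - mu r d j)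
      \<and> alpha2 l r d c j j = piR l r / fact (rV l r + 2) * real (r j) * (real (r j) + 1) *
           (c * (real (rV l r) + 2) - real_of_int (dV l d) - 2 * mu r d j)
      \<and> beta1 l r d g c j = piR l r * real (r j) / fact (rV l r) *
           (real (rV l r) * (real (rV l r) - 1) * c + 2 * (1 - real g)
            - real_of_int (dV l d) * (real (rV l r) - 2) - real (rV l r) * mu r d j))
    \<and> (\<forall>j\<in>{1..l}. \<forall>k\<in>{1..l}. j \<noteq> k \<longrightarrow>
        alpha2 l r d c j k = piR l r / fact (rV l r + 2) * real (r j) * real (r k) *
           (c * (real (rV l r) + 2) - real_of_int (dV l d) - mu r d j - mu r d k))"
proof -
  have alpha2_diag: "alpha2 l r d c j j = piR l r / fact (rV l r + 2) * real (r j) * (real (r j) + 1) *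
      (c * (real (rV l r) + 2) - real_of_int (dV l d) - 2 * mu r d j)" if "j \<in> {1..l}" for j
    using alpha2_eq[OF assms(1,2) that that] by simp
  have alpha2_off_diag: "alpha2 l r d c j k = piR l r / fact (rV l r + 2) * real (r j) * real (r k) *
      (c * (real (rV l r) + 2) - real_of_int (dV l d) - mu r d j - mu r d k)"
    if "j \<in> {1..l}" "k \<in> {1..l}" "j \<noteq> k" for j k
    using alpha2_eq[OF assms(1,2) that(1,2)] that(3) by simp
  show ?thesis
    using alpha0_eq[OF assms(1,2)] beta0_eq[OF assms] alpha1_eq[OF assms(1,2)] beta1_eq[OF assms]
      alpha2_diag alpha2_off_diag by blast
qed

end
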